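(* In the network model described in the context, let $\pi$ be an admissible cyclic policy with period $K^\pi$, and let $\bar{\mu}_e^{\pi}=\frac{1}{K^{\pi}}\sum_{t=0}^{K^{\pi}-1}\mu_e^{\pi}(t)$ denote the time-average activation rate of link $e$. Then all queues are stable under $\pi$ if and only if \[ \bar{\mu}_e^{\pi}\ge \frac{\lambda_i}{w_{i,e}}\quad\text{for all } f_i\in\mathcal{F},\ e\in\mathcal{T}^{(i)}. \]
   Context: Network model: a directed graph $G=(V,E)$; time is slotted. Each link $e$ has capacity $c_e$. Interference is described by a conflict graph on the links; $\mathcal{M}$ is the set of feasible activation sets (independent sets of the conflict graph). Flow $f_i\in\mathcal{F}$ has a fixed route $\mathcal{T}^{(i)}$ (sequence of links), deterministic fluid arrival rate $\lambda_i>0$ per slot at its source. Each link $e\in\mathcal{T}^{(i)}$ reserves a slice of width $w_{i,e}>0$ for $f_i$ with its own FCFS queue of size $Q_{i,e}(t)$ at the beginning of slot $t$ (initially empty). A policy $\pi$ chooses $\mu^\pi(t)\in\mathcal{M}$ in each slot; $\mu^\pi_e(t)=1$ if $e$ is activated. Admissible policies respect interference and are work-conserving: an activated link serves $\min\{Q_{i,e}(t),w_{i,e}\}$ from each of its slice queues; served units move to the next link's queue in the next slot (or are delivered at the last link). A policy is cyclic with period $K^\pi$ if $\mu^\pi(t)=\mu^\pi(t+K^\pi)$ for all $t\ge0$. A queue is stable if it remains bounded as the horizon $T\to\infty$ (arrivals continuing through slot $T$). *)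

theory Defs
  imports Main Complex_Main
begin

definition is_route :: "('v \<times> 'v) set \<Rightarrow> ('v \<times> 'v) list \<Rightarrow> bool" where
  "is_route E r \<longleftrightarrow> r \<noteq> [] \<and> set r \<subseteq> E \<and> distinct r \<and>
     (\<forall>k. Suc k < length r \<longrightarrow> snd (r ! k) = fst (r ! Suc k))"

definition feasible_sets :: "('v \<times> 'v) set \<Rightarrow> (('v \<times> 'v) \<Rightarrow> ('v \<times> 'v) \<Rightarrow> bool) \<Rightarrow> ('v \<times> 'v) set set" where
  "feasible_sets E conflict = {S. S \<subseteq> E \<and> (\<forall>e\<in>S. \<forall>e'\<in>S. e \<noteq> e' \<longrightarrow> \<not> conflict e e')}"

definition serve :: "(nat \<Rightarrow> 'e set) \<Rightarrow> 'e list \<Rightarrow> ('e \<Rightarrow> real) \<Rightarrow> (nat \<Rightarrow> real) \<Rightarrow> nat \<Rightarrow> nat \<Rightarrow> real" where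
  "serve mu r w q t k = (if r ! k \<in> mu t then min (q k) (w (r ! k)) else 0)"

(* qlen mu r w lam t k = queue size Q_{i,e}(t) of the flow with route r at its k-th link e = r!k,
   at the beginning of slot t; initially empty; fluid arrivals lam per slot at the source;
   served units join the next hop's queue in the next slot; served units at the last hop leave. *)
primrec qlen :: "(nat \<Rightarrow> 'e set) \<Rightarrow> 'e list \<Rightarrow> ('e \<Rightarrow> real) \<Rightarrow> real \<Rightarrow> nat \<Rightarrow> nat \<Rightarrow> real" where
  "qlen mu r w lam 0 = (\<lambda>k. 0)"
| "qlen mu r w lam (Suc t) = (\<lambda>k. qlen mu r w lam t k - serve mu r w (qlen mu r w lam t) t k
      + (if k = 0 then lam else serve mu r w (qlen mu r w lam t) t (k - 1)))"

definition avg_rate :: "(nat \<Rightarrow> 'e set) \<Rightarrow> nat \<Rightarrow> 'e \<Rightarrow> real" where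
  "avg_rate mu K e = (\<Sum>t<K. if e \<in> mu t then 1 else 0) / real K"

definition all_stable :: "'f set \<Rightarrow> ('f \<Rightarrow> 'e list) \<Rightarrow> ('f \<Rightarrow> real) \<Rightarrow> ('f \<Rightarrow> 'e \<Rightarrow> real) \<Rightarrow> (nat \<Rightarrow> 'e set) \<Rightarrow> bool" where
  "all_stable F route lam w mu \<longleftrightarrow>
     (\<forall>i\<in>F. \<forall>k<length (route i). \<exists>B. \<forall>t. qlen mu (route i) (w i) (lam i) t k \<le> B)"

end

theory Submission
  imports Defs
begin

text \<open>Along a route the slice queues form a tandem of Lindley recursions.
  If every link of the route is activated at least \<open>K \<lambda> / w\<close> times per period, then by
  induction along the route the input of every hop is \<open>(\<sigma>, \<lambda>)\<close>-bounded (a bounded queue passes a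
  burst bound on to the next hop), and a Lindley queue with such input and sufficient periodic service
  stays bounded. Conversely, the content of the first \<open>k + 1\<close> queues is \<open>\<lambda> t\<close> minus the departures
  of hop \<open>k\<close>, which over \<open>m\<close> periods are at most \<open>m w\<close> times the number of activations per
  period; if this falls short of \<open>m K \<lambda>\<close> the content grows linearly in \<open>m\<close>.\<close>

lemma sum_lessThan_add:
  fixes f :: "nat \<Rightarrow> 'a::comm_monoid_add"
  shows "(\<Sum>u<a + b. f u) = (\<Sum>u<a. f u) + (\<Sum>u<b. f (a + u))"
  by (induction b) (simp_all add: add.assoc)

lemma sum_periodic_shift:
  fixes f :: "nat \<Rightarrow> 'a::cancel_comm_monoid_add"
  assumes "\<forall>t. f (t + K) = f t"
  shows "(\<Sum>u<K. f (s + u)) = (\<Sum>u<K. f u)"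
proof (induction s)
  case (Suc s)
  have "f s + (\<Sum>u<K. f (Suc s + u)) = (\<Sum>u<K. f (s + u)) + f (s + K)"
    using sum.lessThan_Suc_shift[of "\<lambda>u. f (s + u)" K] by simp
  moreover have "f (s + K) = f s"
    using assms by blast
  ultimately have "(\<Sum>u<K. f (Suc s + u)) = (\<Sum>u<K. f (s + u))"
    by (simp add: add.commute)
  then show ?case
    using Suc by simp
qed simp

lemma sum_periodic_multiple:
  fixes f :: "nat \<Rightarrow> 'a::semiring_1_cancel"
  assumes "\<forall>t. f (t + K) = f t"
  shows "(\<Sum>u<m * K. f (s + u)) = of_nat m * (\<Sum>u<K. f u)"
proof (induction m)
  case (Suc m)
  have "(\<Sum>u<Suc m * K. f (s + u)) = (\<Sum>u<m * K. f (s + u)) + (\<Sum>u<K. f (s + m * K + u))"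
    using sum_lessThan_add[of "\<lambda>u. f (s + u)" "m * K" K] by (simp add: ac_simps)
  also have "(\<Sum>u<K. f (s + m * K + u)) = (\<Sum>u<K. f u)"
    by (rule sum_periodic_shift[OF assms])
  finally show ?case
    using Suc by (simp add: algebra_simps)
qed simp

lemma sum_periodic_window_ge:
  fixes f :: "nat \<Rightarrow> real"
  assumes per: "\<forall>t. f (t + K) = f t" and nonneg: "\<forall>t. f t \<ge> 0"
    and "K > 0" and "l \<ge> 0" and period: "real K * l \<le> (\<Sum>u<K. f u)"
  shows "(\<Sum>u<L. f (s + u)) \<ge> (real L - real K) * l"
proof -
  have "L < L div K * K + K"
    using \<open>K > 0\<close> by (metis div_mult_mod_eq mod_less_divisor add_less_cancel_left)
  then have "real L - real K \<le> real (L div K) * real K"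
    by (simp flip: of_nat_mult)
  then have "(real L - real K) * l \<le> real (L div K) * (real K * l)"
    using \<open>l \<ge> 0\<close> by (metis mult.assoc mult_right_mono)
  also have "\<dots> \<le> real (L div K) * (\<Sum>u<K. f u)"
    using period by (simp add: mult_left_mono)
  also have "\<dots> = (\<Sum>u<L div K * K. f (s + u))"
    by (simp add: sum_periodic_multiple[OF per])
  also have "\<dots> \<le> (\<Sum>u<L. f (s + u))"
    using nonneg by (intro sum_mono2) auto
  finally show ?thesis .
qed

text \<open>A queue served at most \<open>W\<close> per active slot and empty at time 0 holds at time \<open>t\<close> at most
  \<open>W\<close> plus the excess of arrivals over offered service in some window ending at \<open>t\<close>: the window
  starts right after the last slot in which an active server emptied the queue.\<close>

lemma lindley_window_bound:
  fixes Q a :: "nat \<Rightarrow> real" and b :: "nat \<Rightarrow> bool"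
  assumes rec: "\<forall>t. Q (Suc t) = Q t - (if b t then min (Q t) W else 0) + a t"
    and "Q 0 = 0" and "W \<ge> 0"
  shows "\<exists>s L. s + L = t \<and>
           Q t \<le> (\<Sum>u<L. a (s + u)) - (\<Sum>u<L. if b (s + u) then W else 0) + W"
proof (induction t)
  case 0
  show ?case
    using \<open>Q 0 = 0\<close> \<open>W \<ge> 0\<close> by auto
next
  case (Suc t)
  then obtain s L where "s + L = t"
    and window: "Q t \<le> (\<Sum>u<L. a (s + u)) - (\<Sum>u<L. if b (s + u) then W else 0) + W"
    by blast
  show ?case
  proof (cases "b t \<and> Q t < W")
    case True
    then have "Q (Suc t) = a t"
      using rec by simp
    then show ?thesis
      using True \<open>W \<ge> 0\<close> by (intro exI[of _ t] exI[of _ 1]) auto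
  next
    case False
    then have "Q (Suc t) = Q t - (if b t then W else 0) + a t"
      using rec by auto
    then show ?thesis
      using \<open>s + L = t\<close> window by (intro exI[of _ s] exI[of _ "Suc L"]) auto
  qed
qed

definition burst_bounded :: "real \<Rightarrow> real \<Rightarrow> (nat \<Rightarrow> real) \<Rightarrow> bool" where
  "burst_bounded l M a \<longleftrightarrow> (\<forall>s L. (\<Sum>u<L. a (s + u)) \<le> l * real L + M)"

lemma lindley_bounded_if_burst_bounded:
  fixes Q a :: "nat \<Rightarrow> real" and b :: "nat \<Rightarrow> bool"
  assumes rec: "\<forall>t. Q (Suc t) = Q t - (if b t then min (Q t) W else 0) + a t"
    and "Q 0 = 0" and "W \<ge> 0" and "l \<ge> 0" and "K > 0"
    and per: "\<forall>t. b (t + K) = b t"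
    and arrivals: "burst_bounded l M a"
    and service: "real K * l \<le> W * (\<Sum>u<K. if b u then 1 else 0)"
  shows "Q t \<le> M + real K * l + W"
proof -
  define f where "f u = (if b u then W else 0)" for u
  obtain s L where window: "Q t \<le> (\<Sum>u<L. a (s + u)) - (\<Sum>u<L. f (s + u)) + W"
    using lindley_window_bound[OF rec \<open>Q 0 = 0\<close> \<open>W \<ge> 0\<close>, of t] unfolding f_def by blast
  have "real K * l \<le> (\<Sum>u<K. f u)"
    using service by (simp add: f_def sum_distrib_left if_distrib cong: if_cong)
  then have "(\<Sum>u<L. f (s + u)) \<ge> (real L - real K) * l"
    using per \<open>W \<ge> 0\<close> \<open>K > 0\<close> \<open>l \<ge> 0\<close> by (intro sum_periodic_window_ge) (auto simp: f_def)
  moreover have "(\<Sum>u<L. a (s + u)) \<le> l * real L + M"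
    using arrivals unfolding burst_bounded_def by blast
  ultimately show ?thesis
    using window by (simp add: algebra_simps)
qed

abbreviation hop_arrivals ::
    "(nat \<Rightarrow> 'e set) \<Rightarrow> 'e list \<Rightarrow> ('e \<Rightarrow> real) \<Rightarrow> real \<Rightarrow> nat \<Rightarrow> nat \<Rightarrow> real" where
  "hop_arrivals mu r w lam t k \<equiv>
     (if k = 0 then lam else serve mu r w (qlen mu r w lam t) t (k - 1))"

lemma qlen_nonneg:
  assumes "lam \<ge> 0" and "\<forall>e\<in>set r. w e > 0" and "k < length r"
  shows "qlen mu r w lam t k \<ge> 0"
  using \<open>k < length r\<close>
proof (induction t arbitrary: k)
  case (Suc t)
  have "hop_arrivals mu r w lam t k \<ge> 0"
  proof (cases "k = 0")
    case False
    then have "qlen mu r w lam t (k - 1) \<ge> 0" and "w (r ! (k - 1)) > 0"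
      using Suc assms(2) by auto
    then show ?thesis
      using False by (simp add: serve_def)
  qed (use \<open>lam \<ge> 0\<close> in simp)
  moreover have "serve mu r w (qlen mu r w lam t) t k \<le> qlen mu r w lam t k"
    using Suc by (simp add: serve_def)
  ultimately show ?case
    by simp
qed simp

lemma qlen_add:
  "qlen mu r w lam (s + L) k = qlen mu r w lam s k + (\<Sum>u<L. hop_arrivals mu r w lam (s + u) k)
     - (\<Sum>u<L. serve mu r w (qlen mu r w lam (s + u)) (s + u) k)"
  by (induction L) auto

lemma sum_qlen_prefix:
  "(\<Sum>j\<le>k. qlen mu r w lam t j) = lam * real t - (\<Sum>u<t. serve mu r w (qlen mu r w lam u) u k)"
proof (induction t)
  case (Suc t)
  have telescope: "(\<Sum>j\<le>k. hop_arrivals mu r w lam t j - serve mu r w (qlen mu r w lam t) t j)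
      = lam - serve mu r w (qlen mu r w lam t) t k"
    by (induction k) auto
  have "(\<Sum>j\<le>k. qlen mu r w lam (Suc t) j) = (\<Sum>j\<le>k. qlen mu r w lam t j)
      + (\<Sum>j\<le>k. hop_arrivals mu r w lam t j - serve mu r w (qlen mu r w lam t) t j)"
    by (simp add: sum.distrib[symmetric] algebra_simps del: sum.atMost_Suc)
  then show ?case
    using Suc telescope by (simp add: algebra_simps)
qed simp

lemma avg_rate_ge_iff:
  assumes "K > 0" and "W > 0"
  shows "lam / W \<le> avg_rate mu K e \<longleftrightarrow> real K * lam \<le> W * (\<Sum>u<K. if e \<in> mu u then 1 else 0)"
  using assms unfolding avg_rate_def
  by (simp add: divide_le_eq le_divide_eq mult.commute mult.left_commute)

lemma qlen_bounded_if_burst_bounded: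
  assumes "lam \<ge> 0" and "w (r ! k) > 0" and "K > 0"
    and "\<forall>t. mu (t + K) = mu t"
    and "lam / w (r ! k) \<le> avg_rate mu K (r ! k)"
    and "burst_bounded lam M (\<lambda>t. hop_arrivals mu r w lam t k)"
  shows "qlen mu r w lam t k \<le> M + real K * lam + w (r ! k)"
  using assms avg_rate_ge_iff[of K "w (r ! k)" lam mu "r ! k"]
  by (intro lindley_bounded_if_burst_bounded[where b = "\<lambda>t. r ! k \<in> mu t" and a = "\<lambda>t. hop_arrivals mu r w lam t k"])
    (auto simp: serve_def)

lemma qlen_bounded_if_rate_sufficient:
  assumes "lam \<ge> 0" and wpos: "\<forall>e\<in>set r. w e > 0" and "K > 0"
    and per: "\<forall>t. mu (t + K) = mu t"
    and rate: "\<forall>e\<in>set r. lam / w e \<le> avg_rate mu K e"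
    and "k < length r"
  shows "\<exists>M B. burst_bounded lam M (\<lambda>t. hop_arrivals mu r w lam t k) \<and> (\<forall>t. qlen mu r w lam t k \<le> B)"
  using \<open>k < length r\<close>
proof (induction k)
  case 0
  have "burst_bounded lam 0 (\<lambda>t. hop_arrivals mu r w lam t 0)"
    by (simp add: burst_bounded_def)
  moreover have "w (r ! 0) > 0" and "lam / w (r ! 0) \<le> avg_rate mu K (r ! 0)"
    using 0 wpos rate by auto
  ultimately show ?case
    using qlen_bounded_if_burst_bounded[OF \<open>lam \<ge> 0\<close> _ \<open>K > 0\<close> per] by blast
next
  case (Suc j)
  then obtain M B where arrivals: "burst_bounded lam M (\<lambda>t. hop_arrivals mu r w lam t j)"
    and bound: "\<forall>t. qlen mu r w lam t j \<le> B"
    by auto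
  have "burst_bounded lam (M + B) (\<lambda>t. hop_arrivals mu r w lam t (Suc j))"
    unfolding burst_bounded_def
  proof (intro allI)
    fix s L
    have "qlen mu r w lam (s + L) j \<ge> 0"
      using qlen_nonneg[OF \<open>lam \<ge> 0\<close> wpos] Suc.prems by simp
    moreover have "(\<Sum>u<L. hop_arrivals mu r w lam (s + u) (Suc j))
        = qlen mu r w lam s j + (\<Sum>u<L. hop_arrivals mu r w lam (s + u) j) - qlen mu r w lam (s + L) j"
      using qlen_add[of mu r w lam s L j] by simp
    ultimately show "(\<Sum>u<L. hop_arrivals mu r w lam (s + u) (Suc j)) \<le> lam * real L + (M + B)"
      using arrivals[unfolded burst_bounded_def, rule_format, of s L] bound[rule_format, of s]
      by linarith
  qed
  moreover have "w (r ! Suc j) > 0" and "lam / w (r ! Suc j) \<le> avg_rate mu K (r ! Suc j)"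
    using Suc.prems wpos rate by auto
  ultimately show ?case
    using qlen_bounded_if_burst_bounded[OF \<open>lam \<ge> 0\<close> _ \<open>K > 0\<close> per] by blast
qed

lemma rate_sufficient_if_qlen_bounded:
  assumes "w (r ! k) > 0" and "K > 0" and per: "\<forall>t. mu (t + K) = mu t"
    and bounded: "\<forall>j\<le>k. \<exists>B. \<forall>t. qlen mu r w lam t j \<le> B"
  shows "lam / w (r ! k) \<le> avg_rate mu K (r ! k)"
proof -
  define g where "g u = (if r ! k \<in> mu u then w (r ! k) else 0)" for u
  have g_periodic: "\<forall>t. g (t + K) = g t"
    using per by (simp add: g_def)
  define slack where "slack = real K * lam - (\<Sum>u<K. g u)"
  obtain B where B: "\<forall>j\<le>k. \<forall>t. qlen mu r w lam t j \<le> B j"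
    using bounded by metis
  have "real m * slack \<le> (\<Sum>j\<le>k. B j)" for m
  proof -
    have "(\<Sum>u<m * K. serve mu r w (qlen mu r w lam u) u k) \<le> (\<Sum>u<m * K. g u)"
      by (intro sum_mono) (simp add: g_def serve_def)
    also have "\<dots> = real m * (\<Sum>u<K. g u)"
      using sum_periodic_multiple[OF g_periodic, where m = m and s = 0] by simp
    finally have "lam * real (m * K) - real m * (\<Sum>u<K. g u) \<le> (\<Sum>j\<le>k. qlen mu r w lam (m * K) j)"
      using sum_qlen_prefix[where mu = mu and r = r and w = w and lam = lam and k = k and t = "m * K"] by linarith
    also have "\<dots> \<le> (\<Sum>j\<le>k. B j)"
      using B by (intro sum_mono) auto
    finally show ?thesis
      by (simp add: slack_def algebra_simps)
  qed
  then have "slack \<le> 0"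
    using ex_less_of_nat_mult[of slack "\<Sum>j\<le>k. B j"] by (meson leD not_le)
  moreover have "(\<Sum>u<K. g u) = w (r ! k) * (\<Sum>u<K. if r ! k \<in> mu u then 1 else 0)"
    by (simp add: g_def sum_distrib_left if_distrib cong: if_cong)
  ultimately have "real K * lam \<le> w (r ! k) * (\<Sum>u<K. if r ! k \<in> mu u then 1 else 0)"
    by (simp add: slack_def)
  then show ?thesis
    by (simp only: avg_rate_ge_iff[OF \<open>K > 0\<close> \<open>w (r ! k) > 0\<close>])
qed

theorem corollary1:
  fixes E :: "('v \<times> 'v) set"
    and c :: "('v \<times> 'v) \<Rightarrow> real"
    and conflict :: "('v \<times> 'v) \<Rightarrow> ('v \<times> 'v) \<Rightarrow> bool"
    and F :: "'f set"
    and route :: "'f \<Rightarrow> ('v \<times> 'v) list"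
    and lam :: "'f \<Rightarrow> real"
    and w :: "'f \<Rightarrow> ('v \<times> 'v) \<Rightarrow> real"
    and mu :: "nat \<Rightarrow> ('v \<times> 'v) set"
    and K :: nat
  assumes "finite E"
    and "finite F"
    and "\<forall>i\<in>F. is_route E (route i)"
    and "\<forall>i\<in>F. lam i > 0"
    and "\<forall>i\<in>F. \<forall>e\<in>set (route i). w i e > 0"
    and "\<forall>e\<in>E. (\<Sum>i\<in>{i\<in>F. e \<in> set (route i)}. w i e) \<le> c e"
    and "\<forall>t. mu t \<in> feasible_sets E conflict"
    and "K > 0"
    and "\<forall>t. mu (t + K) = mu t"
  shows "all_stable F route lam w mu \<longleftrightarrow>
         (\<forall>i\<in>F. \<forall>e\<in>set (route i). avg_rate mu K e \<ge> lam i / w i e)"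
proof
  assume "all_stable F route lam w mu"
  show "\<forall>i\<in>F. \<forall>e\<in>set (route i). avg_rate mu K e \<ge> lam i / w i e"
  proof (intro ballI)
    fix i e
    assume "i \<in> F" and "e \<in> set (route i)"
    then obtain k where "k < length (route i)" and "route i ! k = e"
      by (auto simp: in_set_conv_nth)
    moreover have "\<forall>j\<le>k. \<exists>B. \<forall>t. qlen mu (route i) (w i) (lam i) t j \<le> B"
      using \<open>all_stable F route lam w mu\<close> \<open>i \<in> F\<close> \<open>k < length (route i)\<close>
      unfolding all_stable_def by auto
    ultimately show "avg_rate mu K e \<ge> lam i / w i e"
      using rate_sufficient_if_qlen_bounded[OF _ \<open>K > 0\<close> \<open>\<forall>t. mu (t + K) = mu t\<close>]
        assms(5) \<open>i \<in> F\<close> \<open>e \<in> set (route i)\<close> by blast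
  qed
next
  assume "\<forall>i\<in>F. \<forall>e\<in>set (route i). avg_rate mu K e \<ge> lam i / w i e"
  then show "all_stable F route lam w mu"
    using qlen_bounded_if_rate_sufficient[OF _ _ \<open>K > 0\<close> \<open>\<forall>t. mu (t + K) = mu t\<close>]
      assms(4,5) unfolding all_stable_def by (meson less_imp_le)
qed

end
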